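(* For every finite rooted forest $F$, the sequence of coefficients of the descent polynomial $A_F(q)$ is unimodal, i.e. writing $A_F(q)=\sum_{k=0}^{e}a_kq^k$ (with $e$ the number of edges of $F$), there is an index $j$ with $a_0\le a_1\le\cdots\le a_j\ge a_{j+1}\ge\cdots\ge a_e$.
   Context: A rooted forest $F$ is a finite disjoint union of rooted trees; each non-root vertex $v$ has a unique parent. A labeling of $F$ with $n$ vertices is a bijection $w: V(F)\to\{1,\dots,n\}$; $\mathcal{W}(F)$ denotes the set of all $n!$ labelings. The descent set is $\mathrm{Des}(F,w)=\{v\in V(F): v \text{ has a parent } u \text{ and } w(v)>w(u)\}$, and $\mathrm{des}(F,w)=|\mathrm{Des}(F,w)|$. The descent polynomial is $A_F(q)=\sum_{w\in\mathcal{W}(F)} q^{\mathrm{des}(F,w)}$. *)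

theory Defs
  imports Main
begin

text \<open>Roots are vertices with par v = None; each non-root has a unique parent in V,
  and following parents never cycles (so every vertex leads to a root).\<close>
definition rooted_forest :: "'a set \<Rightarrow> ('a \<Rightarrow> 'a option) \<Rightarrow> bool" where
  "rooted_forest V par \<longleftrightarrow> finite V
     \<and> (\<forall>v\<in>V. \<forall>u. par v = Some u \<longrightarrow> u \<in> V)
     \<and> acyclic {(v, u). v \<in> V \<and> par v = Some u}"

definition labelings :: "'a set \<Rightarrow> ('a \<Rightarrow> nat) set" where
  "labelings V = {w. bij_betw w V {1..card V} \<and> (\<forall>v. v \<notin> V \<longrightarrow> w v = 0)}"

definition descent_set :: "'a set \<Rightarrow> ('a \<Rightarrow> 'a option) \<Rightarrow> ('a \<Rightarrow> nat) \<Rightarrow> 'a set" where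
  "descent_set V par w = {v \<in> V. \<exists>u. par v = Some u \<and> w v > w u}"

definition des :: "'a set \<Rightarrow> ('a \<Rightarrow> 'a option) \<Rightarrow> ('a \<Rightarrow> nat) \<Rightarrow> nat" where
  "des V par w = card (descent_set V par w)"

definition num_edges :: "'a set \<Rightarrow> ('a \<Rightarrow> 'a option) \<Rightarrow> nat" where
  "num_edges V par = card {v \<in> V. par v \<noteq> None}"

definition descent_coeff :: "'a set \<Rightarrow> ('a \<Rightarrow> 'a option) \<Rightarrow> nat \<Rightarrow> nat" where
  "descent_coeff V par k = card {w \<in> labelings V. des V par w = k}"

definition unimodal_upto :: "(nat \<Rightarrow> nat) \<Rightarrow> nat \<Rightarrow> bool" where
  "unimodal_upto a e \<longleftrightarrow> (\<exists>j\<le>e. (\<forall>i. i < j \<longrightarrow> a i \<le> a (Suc i))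
                                  \<and> (\<forall>i. j \<le> i \<and> i < e \<longrightarrow> a i \<ge> a (Suc i)))"

end

(*
  Fix a vertex u all of whose m children are leaves. Let F' be F with u and its children
  made roots and, if u has a parent p, let F'' be F with the children of u reattached to p.
  Composing a labeling w with the transposition of u and a vertex y of the star
  {u} \<union> children does not change the descents of F', while the descents at the star become
  the number of star vertices labeled above w y, plus one if w y exceeds the label of p.
  Summing over y gives
    (m + 1) A_F(q) = (q + ... + q^m) A_F'(q) + A_F''(q)    if u has a parent,
    (m + 1) A_F(q) = (1 + q + ... + q^m) A_F'(q)           if u is a root.
  Being symmetric and unimodal about half the number of edges survives multiplication by a
  block of consecutive powers and addition, and the degrees match, so induction on the number
  of edges plus internal vertices shows that A_F is symmetric and unimodal.
*)
theory Submission
  imports Defs "HOL-Computational_Algebra.Polynomial" "HOL-Combinatorics.Transposition"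
begin

section \<open>Symmetric unimodal sequences\<close>

definition symmetric_unimodal :: "int \<Rightarrow> (int \<Rightarrow> nat) \<Rightarrow> bool" where
  "symmetric_unimodal d b \<longleftrightarrow>
     (\<forall>k. b k = b (d - k)) \<and> (\<forall>k. 2 * k + 2 \<le> d \<longrightarrow> b k \<le> b (k + 1))"

lemma symmetric_unimodalD:
  assumes "symmetric_unimodal d b"
  shows symmetric_unimodal_sym: "b k = b (d - k)"
    and symmetric_unimodal_step: "2 * k + 2 \<le> d \<Longrightarrow> b k \<le> b (k + 1)"
  using assms unfolding symmetric_unimodal_def by blast+

lemma symmetric_unimodal_mono:
  assumes b: "symmetric_unimodal d b" and "i \<le> j" "2 * j \<le> d"
  shows "b i \<le> b j"
  using assms(2,3)
proof (induction j rule: int_ge_induct)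
  case (step j)
  then have "b i \<le> b j" by simp
  also have "\<dots> \<le> b (j + 1)" using step.prems by (intro symmetric_unimodal_step[OF b]) simp
  finally show ?case .
qed simp

lemma symmetric_unimodal_le:
  assumes b: "symmetric_unimodal d b" and "i \<le> j" "i + j \<le> d"
  shows "b i \<le> b j"
proof (cases "2 * j \<le> d")
  case True
  then show ?thesis using symmetric_unimodal_mono[OF b] assms by blast
next
  case False
  have "b i \<le> b (d - j)" using symmetric_unimodal_mono[OF b, of i "d - j"] assms False by auto
  also have "\<dots> = b j" using symmetric_unimodal_sym[OF b, of j] by simp
  finally show ?thesis .
qed

lemma symmetric_unimodal_add:
  "symmetric_unimodal d a \<Longrightarrow> symmetric_unimodal d b \<Longrightarrow> symmetric_unimodal d (\<lambda>k. a k + b k)"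
  unfolding symmetric_unimodal_def by (auto intro: add_mono)

lemma symmetric_unimodal_mult_cancel:
  "symmetric_unimodal d (\<lambda>k. c * b k) \<Longrightarrow> c > 0 \<Longrightarrow> symmetric_unimodal d b"
  unfolding symmetric_unimodal_def by auto

lemma symmetric_unimodal_block_convolution:
  assumes b: "symmetric_unimodal d b" and "lo \<le> hi"
  shows "symmetric_unimodal (d + int lo + int hi) (\<lambda>k. \<Sum>i\<in>{lo..hi}. b (k - int i))"
  unfolding symmetric_unimodal_def
proof (intro conjI allI impI)
  fix k
  have "(\<Sum>i\<in>{lo..hi}. b (d + int lo + int hi - k - int i)) = (\<Sum>i\<in>{lo..hi}. b (k - int (lo + hi - i)))"
  proof (intro sum.cong refl)
    fix i assume "i \<in> {lo..hi}"
    then show "b (d + int lo + int hi - k - int i) = b (k - int (lo + hi - i))"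
      using symmetric_unimodal_sym[OF b, of "d + int lo + int hi - k - int i"]
      by (simp add: of_nat_diff algebra_simps)
  qed
  also have "\<dots> = (\<Sum>i\<in>{lo..hi}. b (k - int i))"
    by (rule sum.reindex_bij_witness[where i="\<lambda>i. lo + hi - i" and j="\<lambda>i. lo + hi - i"]) auto
  finally show "(\<Sum>i\<in>{lo..hi}. b (k - int i)) = (\<Sum>i\<in>{lo..hi}. b (d + int lo + int hi - k - int i))"
    by simp
next
  fix k assume k: "2 * k + 2 \<le> d + int lo + int hi"
  have "(\<Sum>i\<in>{lo..hi}. b (k - int i)) = (\<Sum>i\<in>{lo..<hi}. b (k - int i)) + b (k - int hi)"
    using assms(2) by (simp add: sum.last_plus)
  also have "\<dots> \<le> (\<Sum>i\<in>{lo..<hi}. b (k - int i)) + b (k + 1 - int lo)"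
    using symmetric_unimodal_le[OF b, of "k - int hi" "k + 1 - int lo"] assms(2) k by simp
  also have "\<dots> = (\<Sum>i\<in>{lo..hi}. b (k + 1 - int i))"
  proof -
    have "(\<Sum>i\<in>{lo..<hi}. b (k - int i)) = (\<Sum>i\<in>{Suc lo..hi}. b (k + 1 - int i))"
      by (rule sum.reindex_bij_witness[where i="\<lambda>i. i - 1" and j=Suc]) auto
    then show ?thesis using assms(2) by (simp add: sum.atLeast_Suc_atMost)
  qed
  finally show "(\<Sum>i\<in>{lo..hi}. b (k - int i)) \<le> (\<Sum>i\<in>{lo..hi}. b (k + 1 - int i))" .
qed

(* With integer indices, zero below 0, multiplication by q^i is the plain shift k \<mapsto> k - i. *)
definition int_coeff :: "'a::zero poly \<Rightarrow> int \<Rightarrow> 'a" where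
  "int_coeff p k = (if k < 0 then 0 else coeff p (nat k))"

lemma int_coeff_add: "int_coeff (p + q) k = int_coeff p k + int_coeff q k"
  unfolding int_coeff_def by simp

lemma int_coeff_of_nat_mult: "int_coeff (of_nat c * p) k = c * int_coeff p (k :: int)"
  unfolding int_coeff_def by (simp add: of_nat_poly)

lemma int_coeff_monom_sum_mult:
  fixes p :: "'a::comm_semiring_1 poly"
  shows "int_coeff ((\<Sum>i\<in>I. monom 1 i) * p) k = (\<Sum>i\<in>I. int_coeff p (k - int i))"
  unfolding int_coeff_def sum_distrib_right coeff_sum coeff_monom_mult
  by (cases "k < 0") (auto intro!: sum.cong simp: nat_diff_distrib)

lemma int_coeff_of_nat: "int_coeff p (int n) = coeff p n"
  unfolding int_coeff_def by simp

lemma symmetric_unimodal_int_coeff_const: "symmetric_unimodal 0 (int_coeff [:c:])"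
  unfolding symmetric_unimodal_def int_coeff_def by (auto simp: coeff_pCons split: nat.split)

lemma unimodal_upto_if_symmetric_unimodal:
  assumes p: "symmetric_unimodal (int e) (int_coeff p)"
  shows "unimodal_upto (coeff p) e"
  unfolding unimodal_upto_def
proof (intro exI[of _ "e div 2"] conjI allI impI)
  fix i assume "i < e div 2"
  then have "int_coeff p (int i) \<le> int_coeff p (int (Suc i))"
    by (intro symmetric_unimodal_le[OF p]) auto
  then show "coeff p i \<le> coeff p (Suc i)" by (simp only: int_coeff_of_nat)
next
  fix i assume i: "e div 2 \<le> i \<and> i < e"
  have "int_coeff p (int (Suc i)) = int_coeff p (int e - int i - 1)"
    using symmetric_unimodal_sym[OF p, of "int (Suc i)"] by (simp add: algebra_simps)
  also have "\<dots> \<le> int_coeff p (int i)"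
    using symmetric_unimodal_le[OF p, of "int e - int i - 1" "int i"] i by linarith
  finally show "coeff p (Suc i) \<le> coeff p i" by (simp only: int_coeff_of_nat)
qed simp

definition rank_above :: "('a \<Rightarrow> nat) \<Rightarrow> 'a set \<Rightarrow> 'a \<Rightarrow> nat" where
  "rank_above f A y = card {z\<in>A. f y < f z}"

lemma bij_betw_rank_above:
  assumes A: "finite A" and f: "inj_on f A"
  shows "bij_betw (rank_above f A) A {..<card A}"
proof -
  have rank_less: "rank_above f A y < rank_above f A y'" if "y \<in> A" "y' \<in> A" "f y' < f y" for y y'
    unfolding rank_above_def using that A by (intro psubset_card_mono) auto
  have inj: "inj_on (rank_above f A) A"
  proof (rule inj_onI)
    fix y y' assume "y \<in> A" "y' \<in> A" "rank_above f A y = rank_above f A y'"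
    then show "y = y'" using rank_less f by (metis inj_on_contraD less_irrefl nat_neq_iff)
  qed
  have "rank_above f A ` A \<subseteq> {..<card A}"
    unfolding rank_above_def using A by (auto intro!: psubset_card_mono)
  moreover have "card (rank_above f A ` A) = card {..<card A}"
    using card_image[OF inj] by simp
  ultimately have "rank_above f A ` A = {..<card A}" by (intro card_subset_eq) auto
  then show ?thesis using inj unfolding bij_betw_def by blast
qed

lemma sum_rank_above:
  assumes "finite A" "inj_on f A"
  shows "(\<Sum>y\<in>A. h (rank_above f A y)) = (\<Sum>i<card A. h i)"
  using sum.reindex_bij_betw[OF bij_betw_rank_above[OF assms]] .

lemma sum_lessThan_shift_below:
  assumes "0 < n" "r \<le> n"
  shows "(\<Sum>i<n. h (if i < r then Suc i else i)) = (\<Sum>i\<in>{1..<n}. h i) + h r"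
  using assms
proof (induction n)
  case (Suc n)
  show ?case
  proof (cases "r = Suc n")
    case True
    have "(\<Sum>i<Suc n. h (Suc i)) = (\<Sum>i\<in>{1..<Suc (Suc n)}. h i)"
      by (rule sum.reindex_bij_witness[where i="\<lambda>i. i - 1" and j=Suc]) auto
    then show ?thesis using True by simp
  next
    case False
    then show ?thesis using Suc by (cases "n = 0") (auto simp: le_Suc_eq add_ac)
  qed
qed simp

lemma sum_rank_above_threshold:
  assumes A: "finite A" "A \<noteq> {}" and f: "inj_on f A" and x: "x \<notin> f ` A"
  shows "(\<Sum>y\<in>A. h (rank_above f A y + (if x < f y then 1 else 0)))
       = (\<Sum>i\<in>{1..<card A}. h i) + h (card {z\<in>A. x < f z})"
proof -
  define r where "r = card {z\<in>A. x < f z}"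
  have above_iff: "x < f y \<longleftrightarrow> rank_above f A y < r" if y: "y \<in> A" for y
  proof
    assume "x < f y"
    then show "rank_above f A y < r"
      unfolding rank_above_def r_def using y A by (intro psubset_card_mono) auto
  next
    assume "rank_above f A y < r"
    moreover have "r \<le> rank_above f A y" if "f y < x"
      unfolding rank_above_def r_def using that A by (intro card_mono) auto
    moreover have "f y \<noteq> x" using x y by blast
    ultimately show "x < f y" by linarith
  qed
  have "r \<le> card A" unfolding r_def using A by (intro card_mono) auto
  have "0 < card A" using A by auto
  have "(\<Sum>y\<in>A. h (rank_above f A y + (if x < f y then 1 else 0)))
      = (\<Sum>y\<in>A. h (if rank_above f A y < r then Suc (rank_above f A y) else rank_above f A y))"
    using above_iff by (intro sum.cong) auto
  also have "\<dots> = (\<Sum>i<card A. h (if i < r then Suc i else i))"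
    by (rule sum_rank_above[OF A(1) f])
  also have "\<dots> = (\<Sum>i\<in>{1..<card A}. h i) + h r"
    by (rule sum_lessThan_shift_below) fact+
  finally show ?thesis unfolding r_def .
qed

section \<open>Labelings and the descent polynomial\<close>

lemma finite_labelings: "finite V \<Longrightarrow> finite (labelings V)"
proof -
  assume V: "finite V"
  have "labelings V \<subseteq> {f. \<forall>x. (x \<in> V \<longrightarrow> f x \<in> {1..card V}) \<and> (x \<notin> V \<longrightarrow> f x = 0)}"
    unfolding labelings_def bij_betw_def by auto
  then show ?thesis using finite_set_of_finite_funs[OF V, of "{1..card V}" 0] finite_subset by blast
qed

lemma labelings_inj_on: "w \<in> labelings V \<Longrightarrow> inj_on w V"
  unfolding labelings_def bij_betw_def by auto

lemma comp_transpose_in_labelings: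
  assumes "w \<in> labelings V" "u \<in> V" "y \<in> V"
  shows "w \<circ> transpose u y \<in> labelings V"
proof -
  have "bij_betw (Fun.swap u y w) V {1..card V}"
    using assms bij_betw_swap_iff[of u V y w "{1..card V}"] unfolding labelings_def by auto
  moreover have "\<forall>v. v \<notin> V \<longrightarrow> (w \<circ> transpose u y) v = 0"
    using assms unfolding labelings_def by (auto simp: transpose_def)
  ultimately show ?thesis unfolding labelings_def by simp
qed

lemma sum_labelings_comp_transpose:
  assumes "u \<in> V" "y \<in> V"
  shows "(\<Sum>w\<in>labelings V. g (w \<circ> transpose u y)) = (\<Sum>w\<in>labelings V. g w)"
  by (rule sum.reindex_bij_witness[where i="\<lambda>w. w \<circ> transpose u y" and j="\<lambda>w. w \<circ> transpose u y"])
     (auto simp: comp_assoc comp_transpose_in_labelings assms)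

lemma card_transpose_filter:
  assumes "a \<in> A" "b \<in> A"
  shows "card {x\<in>A. P (transpose a b x)} = card {x\<in>A. P x}"
proof -
  have "{x\<in>A. P (transpose a b x)} = transpose a b ` {x\<in>A. P x}"
    using assms by (auto simp: image_iff transpose_def split: if_splits)
  then show ?thesis by (simp add: card_image)
qed

lemma des_attach_roots:
  assumes "finite V" "N \<subseteq> V" "\<And>v. v \<in> N \<Longrightarrow> par0 v = None" "\<And>v. v \<in> V - N \<Longrightarrow> par1 v = par0 v"
  shows "des V par1 w = des V par0 w + card {x\<in>N. \<exists>z. par1 x = Some z \<and> w z < w x}"
proof -
  let ?new = "{x\<in>N. \<exists>z. par1 x = Some z \<and> w z < w x}"
  have "descent_set V par1 w = descent_set V par0 w \<union> ?new"
    using assms(2-4) unfolding descent_set_def by fastforce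
  moreover have "descent_set V par0 w \<inter> ?new = {}"
    using assms(3) unfolding descent_set_def by auto
  moreover have "finite (descent_set V par0 w)"
    using assms(1) unfolding descent_set_def by simp
  moreover have "finite ?new"
    using finite_subset[OF assms(2,1)] by simp
  ultimately show ?thesis unfolding des_def by (simp add: card_Un_disjoint)
qed

definition descent_poly :: "'a set \<Rightarrow> ('a \<Rightarrow> 'a option) \<Rightarrow> nat poly" where
  "descent_poly V par = (\<Sum>w\<in>labelings V. monom 1 (des V par w))"

lemma coeff_descent_poly:
  assumes "finite V"
  shows "coeff (descent_poly V par) k = descent_coeff V par k"
  using finite_labelings[OF assms]
  by (simp add: descent_poly_def descent_coeff_def coeff_sum sum.If_cases eq_commute Int_def)

lemma descent_poly_no_edges:
  assumes "\<And>v. v \<in> V \<Longrightarrow> par v = None"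
  shows "descent_poly V par = [:card (labelings V):]"
proof -
  have "descent_set V par w = {}" for w
    using assms unfolding descent_set_def by auto
  then have "des V par w = 0" for w
    unfolding des_def by simp
  then show ?thesis by (simp add: descent_poly_def monom_0 of_nat_poly)
qed

definition internal_vertices :: "'a set \<Rightarrow> ('a \<Rightarrow> 'a option) \<Rightarrow> 'a set" where
  "internal_vertices V par = {v\<in>V. par v \<noteq> None \<and> (\<exists>y\<in>V. par y = Some v)}"

section \<open>Removing the star of a vertex whose children are leaves\<close>

locale leaf_parent =
  fixes V :: "'a set" and par :: "'a \<Rightarrow> 'a option" and u :: 'a
  assumes forest: "rooted_forest V par" and u_in_V: "u \<in> V"
    and has_child: "\<exists>c\<in>V. par c = Some u"
    and children_are_leaves: "\<And>c y. c \<in> V \<Longrightarrow> par c = Some u \<Longrightarrow> y \<in> V \<Longrightarrow> par y \<noteq> Some c"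
begin

definition children :: "'a set" where "children = {v\<in>V. par v = Some u}"
definition star :: "'a set" where "star = insert u children"
definition par_cut :: "'a \<Rightarrow> 'a option" where "par_cut v = (if v \<in> star then None else par v)"
definition par_regraft :: "'a \<Rightarrow> 'a option" where
  "par_regraft v = (if v \<in> children then par u else par v)"

abbreviation edges :: "('a \<times> 'a) set" where "edges \<equiv> {(v, z). v \<in> V \<and> par v = Some z}"

lemma finite_V: "finite V" using forest unfolding rooted_forest_def by simp
lemma parent_in_V: "v \<in> V \<Longrightarrow> par v = Some z \<Longrightarrow> z \<in> V" using forest unfolding rooted_forest_def by blast
lemma acyclic_edges: "acyclic edges" using forest unfolding rooted_forest_def by simp

lemma parent_neq_self: "v \<in> V \<Longrightarrow> par v \<noteq> Some v"
  using acyclic_edges unfolding acyclic_def by blast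

lemma u_notin_children: "u \<notin> children" using parent_neq_self u_in_V unfolding children_def by auto
lemma star_subset_V: "star \<subseteq> V" unfolding star_def children_def using u_in_V by auto
lemma finite_children: "finite children" unfolding children_def using finite_V by simp
lemma finite_star: "finite star" using star_subset_V finite_V finite_subset by auto
lemma children_nonempty: "children \<noteq> {}" using has_child unfolding children_def by auto
lemma card_star: "card star = Suc (card children)"
  unfolding star_def using u_notin_children finite_children by simp

lemma labeling_inj_on_star: "w \<in> labelings V \<Longrightarrow> inj_on w star"
  using labelings_inj_on star_subset_V inj_on_subset by blast

lemma parent_notin_star: "v \<in> V \<Longrightarrow> v \<notin> star \<Longrightarrow> par v = Some z \<Longrightarrow> z \<notin> star"
  using children_are_leaves unfolding star_def children_def by auto

lemma parent_of_u_notin_star: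
  assumes "par u = Some p"
  shows "p \<in> V" "p \<notin> star"
proof -
  show p: "p \<in> V" using parent_in_V u_in_V assms by blast
  have "(u, p) \<in> edges\<^sup>+" "(p, u) \<notin> edges\<^sup>+"
    using acyclic_edges assms u_in_V unfolding acyclic_def by (auto intro: trancl_into_trancl)
  then have "par p \<noteq> Some u" using p by blast
  then show "p \<notin> star" using parent_neq_self[OF u_in_V] assms unfolding star_def children_def by auto
qed

lemma rooted_forest_par_cut: "rooted_forest V par_cut"
proof -
  have "{(v, z). v \<in> V \<and> par_cut v = Some z} \<subseteq> edges" unfolding par_cut_def by (auto split: if_splits)
  then show ?thesis
    using forest acyclic_subset unfolding rooted_forest_def par_cut_def by (auto split: if_splits)
qed

lemma rooted_forest_par_regraft:
  assumes "par u = Some p"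
  shows "rooted_forest V par_regraft"
proof -
  have "{(v, z). v \<in> V \<and> par_regraft v = Some z} \<subseteq> edges\<^sup>+"
  proof clarify
    fix v z assume v: "v \<in> V" "par_regraft v = Some z"
    show "(v, z) \<in> edges\<^sup>+"
    proof (cases "v \<in> children")
      case True
      then have "(v, u) \<in> edges" "(u, z) \<in> edges" using v assms u_in_V unfolding par_regraft_def children_def by auto
      then show ?thesis by (meson r_into_trancl' trancl_into_trancl2)
    next
      case False
      then show ?thesis using v unfolding par_regraft_def by auto
    qed
  qed
  moreover have "acyclic (edges\<^sup>+)" using acyclic_edges by (simp add: acyclic_def)
  moreover have "par_regraft v = Some z \<Longrightarrow> v \<in> V \<Longrightarrow> z \<in> V" for v z
    using parent_in_V parent_of_u_notin_star(1)[OF assms] assms unfolding par_regraft_def by (auto split: if_splits)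
  ultimately show ?thesis using finite_V acyclic_subset unfolding rooted_forest_def by blast
qed

lemma num_edges_par_cut:
  "num_edges V par = num_edges V par_cut + card children + (if par u = None then 0 else 1)"
proof -
  have split: "{v\<in>V. par v \<noteq> None} = {v\<in>V. par_cut v \<noteq> None} \<union> children \<union> (if par u = None then {} else {u})"
    using u_in_V unfolding par_cut_def star_def children_def by auto
  have "finite {v\<in>V. par_cut v \<noteq> None}" using finite_V by simp
  moreover have "{v\<in>V. par_cut v \<noteq> None} \<inter> children = {}" unfolding par_cut_def star_def by auto
  moreover have "({v\<in>V. par_cut v \<noteq> None} \<union> children) \<inter> (if par u = None then {} else {u}) = {}"
    using u_notin_children unfolding par_cut_def star_def by auto
  ultimately show ?thesis unfolding num_edges_def split
    using finite_children by (simp add: card_Un_disjoint)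
qed

lemma num_edges_par_regraft: "par u \<noteq> None \<Longrightarrow> num_edges V par_regraft = num_edges V par"
  unfolding num_edges_def par_regraft_def children_def by (rule arg_cong[where f=card]) auto

lemma internal_vertices_par_cut: "internal_vertices V par_cut \<subseteq> internal_vertices V par"
  unfolding internal_vertices_def par_cut_def by (auto split: if_splits)

lemma u_internal: "par u \<noteq> None \<Longrightarrow> u \<in> internal_vertices V par"
  using u_in_V has_child unfolding internal_vertices_def by auto

lemma internal_vertices_par_regraft:
  assumes "par u = Some p"
  shows "internal_vertices V par_regraft \<subseteq> internal_vertices V par - {u}"
proof
  fix v assume "v \<in> internal_vertices V par_regraft"
  then obtain y where v: "v \<in> V" "par_regraft v \<noteq> None" and y: "y \<in> V" "par_regraft y = Some v"
    unfolding internal_vertices_def by auto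
  have "par v \<noteq> None" using v assms unfolding par_regraft_def children_def by (auto split: if_splits)
  moreover have "\<exists>y\<in>V. par y = Some v" "v \<noteq> u"
    using y u_in_V assms parent_neq_self[OF u_in_V] unfolding par_regraft_def children_def
    by (auto split: if_splits)
  ultimately show "v \<in> internal_vertices V par - {u}" using v unfolding internal_vertices_def by auto
qed

lemma des_par_cut_comp_transpose:
  assumes "y \<in> star"
  shows "des V par_cut (w \<circ> transpose u y) = des V par_cut w"
proof -
  have fixes_outside: "transpose u y v = v" if "v \<notin> star" for v
    using that assms unfolding star_def by (auto simp: transpose_def)
  have "descent_set V par_cut (w \<circ> transpose u y) = descent_set V par_cut w"
    unfolding descent_set_def par_cut_def
    using fixes_outside parent_notin_star by (auto split: if_splits)
  then show ?thesis unfolding des_def by simp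
qed

lemma des_comp_transpose:
  assumes y: "y \<in> star"
  shows "des V par (w \<circ> transpose u y) = des V par_cut w + rank_above w star y
           + (case par u of None \<Rightarrow> 0 | Some p \<Rightarrow> if w p < w y then 1 else 0)"
proof -
  let ?w' = "w \<circ> transpose u y"
  let ?parent_descent = "\<exists>z. par u = Some z \<and> ?w' z < ?w' u"
  have "des V par ?w' = des V par_cut ?w' + card {x\<in>star. \<exists>z. par x = Some z \<and> ?w' z < ?w' x}"
    by (rule des_attach_roots[OF finite_V star_subset_V]) (auto simp: par_cut_def)
  also have "des V par_cut ?w' = des V par_cut w" by (rule des_par_cut_comp_transpose[OF y])
  \<comment> \<open>After the swap u carries the label w y, and the star carries its own labels permuted.\<close>
  also have "{x\<in>star. \<exists>z. par x = Some z \<and> ?w' z < ?w' x}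
      = {x\<in>star. w y < w (transpose u y x)} \<union> {x\<in>{u}. ?parent_descent}"
    using u_notin_children unfolding star_def children_def by auto
  also have "card \<dots> = card {x\<in>star. w y < w (transpose u y x)} + card {x\<in>{u}. ?parent_descent}"
    using finite_star by (intro card_Un_disjoint) auto
  also have "card {x\<in>star. w y < w (transpose u y x)} = rank_above w star y"
    unfolding rank_above_def using card_transpose_filter[of u star y] y by (simp add: star_def)
  also have "card {x\<in>{u}. ?parent_descent}
      = (case par u of None \<Rightarrow> 0 | Some p \<Rightarrow> if w p < w y then 1 else 0)"
  proof (cases "par u")
    case (Some p)
    then have "transpose u y p = p"
      using parent_of_u_notin_star(2) y unfolding star_def by (auto simp: transpose_def)
    then show ?thesis using Some by simp
  qed simp
  finally show ?thesis by (simp add: comp_def add.assoc)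
qed

lemma des_par_regraft:
  assumes "par u = Some p"
  shows "des V par_regraft w = des V par_cut w + card {x\<in>star. w p < w x}"
proof -
  have "des V par_regraft w = des V par_cut w + card {x\<in>star. \<exists>z. par_regraft x = Some z \<and> w z < w x}"
    by (rule des_attach_roots[OF finite_V star_subset_V]) (auto simp: par_cut_def par_regraft_def star_def)
  moreover have "{x\<in>star. \<exists>z. par_regraft x = Some z \<and> w z < w x} = {x\<in>star. w p < w x}"
    using assms u_notin_children unfolding par_regraft_def star_def by auto
  ultimately show ?thesis by simp
qed

lemma card_star_mult_descent_poly:
  "of_nat (card star) * descent_poly V par =
     (\<Sum>w\<in>labelings V. monom 1 (des V par_cut w) *
        (\<Sum>y\<in>star. monom 1 (rank_above w star y
           + (case par u of None \<Rightarrow> 0 | Some p \<Rightarrow> if w p < w y then 1 else 0))))"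
proof -
  have "of_nat (card star) * descent_poly V par = (\<Sum>y\<in>star. descent_poly V par)" by simp
  also have "\<dots> = (\<Sum>y\<in>star. \<Sum>w\<in>labelings V. monom 1 (des V par (w \<circ> transpose u y)))"
    unfolding descent_poly_def using star_subset_V u_in_V
    by (intro sum.cong refl sum_labelings_comp_transpose[symmetric]) auto
  also have "\<dots> = (\<Sum>w\<in>labelings V. \<Sum>y\<in>star. monom 1 (des V par_cut w + (rank_above w star y
           + (case par u of None \<Rightarrow> 0 | Some p \<Rightarrow> if w p < w y then 1 else 0))))"
    by (subst sum.swap) (intro sum.cong refl, simp add: des_comp_transpose add.assoc)
  finally show ?thesis by (simp add: sum_distrib_left mult_monom)
qed

lemma descent_poly_recurrence_parent:
  assumes p: "par u = Some p"
  shows "of_nat (card star) * descent_poly V par =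
           (\<Sum>i\<in>{1..card children}. monom 1 i) * descent_poly V par_cut + descent_poly V par_regraft"
proof -
  let ?block = "\<Sum>i\<in>{1..card children}. monom 1 i :: nat poly"
  have rank_sum: "(\<Sum>y\<in>star. monom 1 (rank_above w star y + (if w p < w y then 1 else 0)))
      = ?block + monom 1 (card {z\<in>star. w p < w z})" if w: "w \<in> labelings V" for w
  proof -
    have "inj_on w star" using labeling_inj_on_star[OF w] .
    moreover have "w p \<notin> w ` star"
      using labelings_inj_on[OF w] parent_of_u_notin_star[OF p] star_subset_V by (auto dest: inj_onD)
    ultimately show ?thesis
      using sum_rank_above_threshold[OF finite_star] card_star
      by (simp add: star_def atLeastLessThanSuc_atLeastAtMost)
  qed
  have "of_nat (card star) * descent_poly V par =
      (\<Sum>w\<in>labelings V. monom 1 (des V par_cut w) * (?block + monom 1 (card {z\<in>star. w p < w z})))"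
    unfolding card_star_mult_descent_poly using p rank_sum by (intro sum.cong) auto
  also have "\<dots> = (\<Sum>w\<in>labelings V. ?block * monom 1 (des V par_cut w) + monom 1 (des V par_regraft w))"
    by (intro sum.cong refl) (simp add: des_par_regraft[OF p] mult_monom algebra_simps)
  finally show ?thesis by (simp add: descent_poly_def sum.distrib sum_distrib_left)
qed

lemma descent_poly_recurrence_root:
  assumes "par u = None"
  shows "of_nat (card star) * descent_poly V par = (\<Sum>i\<in>{0..card children}. monom 1 i) * descent_poly V par_cut"
proof -
  have rank_sum: "(\<Sum>y\<in>star. monom 1 (rank_above w star y)) = (\<Sum>i\<in>{0..card children}. monom 1 i)"
    if w: "w \<in> labelings V" for w
    using sum_rank_above[OF finite_star labeling_inj_on_star[OF w]] card_star
    by (simp add: lessThan_Suc_atMost atMost_atLeast0)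
  have "of_nat (card star) * descent_poly V par =
      (\<Sum>w\<in>labelings V. monom 1 (des V par_cut w) * (\<Sum>i\<in>{0..card children}. monom 1 i))"
    unfolding card_star_mult_descent_poly
    by (intro sum.cong refl) (simp only: assms option.case add_0_right rank_sum)
  also have "\<dots> = descent_poly V par_cut * (\<Sum>i\<in>{0..card children}. monom 1 i)"
    unfolding descent_poly_def by (rule sum_distrib_right[symmetric])
  finally show ?thesis by (simp only: mult.commute)
qed

lemma symmetric_unimodal_descent_poly_root_step:
  assumes root: "par u = None"
    and cut: "symmetric_unimodal (int (num_edges V par_cut)) (int_coeff (descent_poly V par_cut))"
  shows "symmetric_unimodal (int (num_edges V par)) (int_coeff (descent_poly V par))"
proof -
  have "symmetric_unimodal (int (num_edges V par_cut) + int 0 + int (card children))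
      (\<lambda>k. \<Sum>i\<in>{0..card children}. int_coeff (descent_poly V par_cut) (k - int i))"
    by (rule symmetric_unimodal_block_convolution[OF cut]) simp
  moreover have "card star * int_coeff (descent_poly V par) k
      = (\<Sum>i\<in>{0..card children}. int_coeff (descent_poly V par_cut) (k - int i))" for k
    by (simp only: int_coeff_of_nat_mult[symmetric] descent_poly_recurrence_root[OF root] int_coeff_monom_sum_mult)
  ultimately have "symmetric_unimodal (int (num_edges V par)) (\<lambda>k. card star * int_coeff (descent_poly V par) k)"
    using num_edges_par_cut root by simp
  then show ?thesis by (rule symmetric_unimodal_mult_cancel) (simp add: card_star)
qed

lemma symmetric_unimodal_descent_poly_parent_step:
  assumes p: "par u = Some p"
    and cut: "symmetric_unimodal (int (num_edges V par_cut)) (int_coeff (descent_poly V par_cut))"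
    and regraft: "symmetric_unimodal (int (num_edges V par_regraft)) (int_coeff (descent_poly V par_regraft))"
  shows "symmetric_unimodal (int (num_edges V par)) (int_coeff (descent_poly V par))"
proof -
  have "1 \<le> card children" using children_nonempty finite_children by (simp add: Suc_le_eq card_gt_0_iff)
  then have "symmetric_unimodal (int (num_edges V par_cut) + int 1 + int (card children))
      (\<lambda>k. \<Sum>i\<in>{1..card children}. int_coeff (descent_poly V par_cut) (k - int i))"
    by (rule symmetric_unimodal_block_convolution[OF cut])
  moreover have "int (num_edges V par_cut) + int 1 + int (card children) = int (num_edges V par)"
    using num_edges_par_cut p by simp
  ultimately have "symmetric_unimodal (int (num_edges V par))
      (\<lambda>k. (\<Sum>i\<in>{1..card children}. int_coeff (descent_poly V par_cut) (k - int i))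
           + int_coeff (descent_poly V par_regraft) k)"
    using symmetric_unimodal_add regraft num_edges_par_regraft p by simp
  moreover have "card star * int_coeff (descent_poly V par) k
      = (\<Sum>i\<in>{1..card children}. int_coeff (descent_poly V par_cut) (k - int i))
        + int_coeff (descent_poly V par_regraft) k" for k
    by (simp only: int_coeff_of_nat_mult[symmetric] descent_poly_recurrence_parent[OF p]
        int_coeff_add int_coeff_monom_sum_mult)
  ultimately have "symmetric_unimodal (int (num_edges V par)) (\<lambda>k. card star * int_coeff (descent_poly V par) k)"
    by simp
  then show ?thesis by (rule symmetric_unimodal_mult_cancel) (simp add: card_star)
qed

end

lemma exists_leaf_parent:
  assumes forest: "rooted_forest V par" and "v \<in> V" "par v = Some z"
  shows "\<exists>u. leaf_parent V par u"
proof -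
  let ?E = "{(v, z). v \<in> V \<and> par v = Some z}"
  define parents where "parents = {x\<in>V. \<exists>y\<in>V. par y = Some x}"
  have closed: "\<And>v z. v \<in> V \<Longrightarrow> par v = Some z \<Longrightarrow> z \<in> V" and "finite V" "acyclic ?E"
    using forest unfolding rooted_forest_def by blast+
  then have "finite ?E"
    by (intro finite_subset[OF _ finite_cartesian_product[of V V]]) auto
  then have wf: "wf ?E" using \<open>acyclic ?E\<close> by (rule finite_acyclic_wf)
  have "z \<in> parents" unfolding parents_def using assms(2,3) closed by blast
  then obtain u where u: "u \<in> parents" and minimal: "\<And>y. (y, u) \<in> ?E \<Longrightarrow> y \<notin> parents"
    using wf_eq_minimal[THEN iffD1, OF wf, rule_format] by blast
  have "leaf_parent V par u"
  proof
    show "rooted_forest V par" by (rule forest)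
    show "u \<in> V" "\<exists>c\<in>V. par c = Some u" using u unfolding parents_def by auto
    show "par y \<noteq> Some c" if "c \<in> V" "par c = Some u" "y \<in> V" for c y
      using minimal[of c] that unfolding parents_def by blast
  qed
  then show ?thesis ..
qed

lemma symmetric_unimodal_descent_poly:
  assumes "rooted_forest V par"
  shows "symmetric_unimodal (int (num_edges V par)) (int_coeff (descent_poly V par))"
  using assms
proof (induction "num_edges V par + card (internal_vertices V par)" arbitrary: par rule: less_induct)
  case less
  show ?case
  proof (cases "\<exists>v\<in>V. par v \<noteq> None")
    case False
    then have "num_edges V par = 0" unfolding num_edges_def by (auto simp: card_eq_0_iff)
    then show ?thesis
      using False descent_poly_no_edges symmetric_unimodal_int_coeff_const by (metis of_nat_0)
  next
    case True
    then obtain v z where "v \<in> V" "par v = Some z" by blast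
    then obtain u where "leaf_parent V par u" using exists_leaf_parent[OF less.prems] by blast
    then interpret leaf_parent V par u .
    have finite_internal: "finite (internal_vertices V q)" for q
      using finite_V unfolding internal_vertices_def by simp
    have "num_edges V par_cut < num_edges V par"
      using num_edges_par_cut children_nonempty finite_children by (simp add: card_gt_0_iff)
    moreover have "card (internal_vertices V par_cut) \<le> card (internal_vertices V par)"
      by (rule card_mono[OF finite_internal internal_vertices_par_cut])
    ultimately have cut: "symmetric_unimodal (int (num_edges V par_cut)) (int_coeff (descent_poly V par_cut))"
      by (intro less.hyps rooted_forest_par_cut) simp
    show ?thesis
    proof (cases "par u")
      case None
      then show ?thesis using cut by (rule symmetric_unimodal_descent_poly_root_step)
    next
      case (Some p)
      have "card (internal_vertices V par_regraft) < card (internal_vertices V par)"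
        using internal_vertices_par_regraft[OF Some] u_internal Some
        by (intro psubset_card_mono finite_internal) auto
      then have "symmetric_unimodal (int (num_edges V par_regraft)) (int_coeff (descent_poly V par_regraft))"
        using num_edges_par_regraft Some by (intro less.hyps rooted_forest_par_regraft[OF Some]) simp
      with Some cut show ?thesis by (rule symmetric_unimodal_descent_poly_parent_step)
    qed
  qed
qed

theorem theorem2p3:
  fixes V :: "'a set" and par :: "'a \<Rightarrow> 'a option"
  assumes "rooted_forest V par"
  shows "unimodal_upto (descent_coeff V par) (num_edges V par)"
proof -
  have "finite V" using assms unfolding rooted_forest_def by simp
  then have "descent_coeff V par = coeff (descent_poly V par)"
    by (simp add: fun_eq_iff coeff_descent_poly)
  then show ?thesis
    using unimodal_upto_if_symmetric_unimodal[OF symmetric_unimodal_descent_poly[OF assms]] by simp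
qed

end
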